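(* Under the standing assumptions below, let $\{\pi_k\}$ be the sequence generated by the trust-region method described in the context, and assume $\mathbb A^*_{\pi_k}>0$ for all $k$ (so that every ratio $r_k$ is well defined). Then (1) $\liminf_{k\to\infty}\mathbb A^*_{\pi_k}=0$; (2) $\lim_{k\to\infty}\eta(\pi_k)=\eta(\pi^* )$, where $\pi^*$ is an optimal solution of $\max_{\pi\in\Pi}\eta(\pi)$.
   Context: Consider an infinite-horizon discounted Markov decision process $(\mathcal S,\mathcal A,P,r,\rho_0,\gamma)$ with finite state space $\mathcal S$, finite action space $\mathcal A$, transition probabilities $P(s'|s,a)$, bounded reward function $r:\mathcal S\times\mathcal A\to\mathbb R$, initial-state distribution $\rho_0$ with $\rho_0(s)>0$ for all $s\in\mathcal S$, and discount factor $\gamma\in(0,1)$. A policy $\pi$ assigns to each state $s$ a probability distribution $\pi(\cdot|s)$ on $\mathcal A$; $\Pi$ denotes the set of all policies. The total expected reward is $\eta(\pi)=\mathbb E_\pi[\sum_{t=0}^\infty\gamma^t r(s_t,a_t)]$, where $s_0\sim\rho_0$, $a_t\sim\pi(\cdot|s_t)$, $s_{t+1}\sim P(\cdot|s_t,a_t)$. The unnormalized discounted visitation frequency is $\rho_\pi(s)=\sum_{t=0}^\infty\gamma^t\mathbb P(s_t=s\mid\pi)$. $Q_\pi(s,a)=\mathbb E_\pi[\sum_{l\ge0}\gamma^l r(s_l,a_l)\mid s_0=s,a_0=a]$, $V_\pi(s)=\mathbb E_\pi[\sum_{l\ge0}\gamma^l r(s_l,a_l)\mid s_0=s]$, and the advantage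 is $A_\pi(s,a)=Q_\pi(s,a)-V_\pi(s)$. The surrogate function is $L_\pi(\tilde\pi)=\eta(\pi)+\sum_s\rho_\pi(s)\sum_a\tilde\pi(a|s)A_\pi(s,a)$. The policy advantage of $\pi'$ with respect to $\pi$ is $\mathbb A_\pi(\pi')=\sum_s\rho_\pi(s)\sum_a\pi'(a|s)A_\pi(s,a)$, and $\mathbb A^*_\pi=\max_{\pi'\in\Pi}\mathbb A_\pi(\pi')$. The total variation distance is $D_{TV}(p\|q)=\frac12\sum_x|p(x)-q(x)|$. Trust-region method: fix constants $0<\beta_0<\beta_1<1$ and $0<\gamma_3<\gamma_2\le1<\gamma_1$, an initial policy $\pi_0$ and radius $\delta_0>0$. At iteration $k$, let $\tilde\pi_{k+1}$ be an optimal solution of $\max_{\pi\in\Pi}L_{\pi_k}(\pi)$ subject to $\sum_s\rho_{\pi_k}(s)D_{TV}(\pi_k(\cdot|s)\|\pi(\cdot|s))\le\delta_k$; compute $r_k=\frac{\eta(\tilde\pi_{k+1})-\eta(\pi_k)}{L_{\pi_k}(\tilde\pi_{k+1})-L_{\pi_k}(\pi_k)}$; set $\pi_{k+1}=\tilde\pi_{k+1}$ if $r_k\ge\beta_0$ and $\pi_{k+1}=\pi_k$ otherwise; set $\delta_{k+1}=\gamma_1\delta_k$ if $r_k\ge\beta_1$, $\delta_{k+1}=\gamma_2\delta_k$ if $r_k\in[\beta_0,\beta_1)$, and $\delta_{k+1}=\gamma_3\delta_k$ otherwise. *)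

theory Defs
  imports "HOL-Analysis.Analysis" "HOL-Library.Liminf_Limsup"
begin

text \<open>Finite MDP with states of type 's::finite and actions of type 'a::finite.
  P s a s' = transition probability P(s'|s,a); r s a = reward; gam = discount factor.
  A policy p s a = p(a|s).\<close>

definition is_stoch :: "('x::finite \<Rightarrow> real) \<Rightarrow> bool" where
  "is_stoch p \<longleftrightarrow> (\<forall>x. p x \<ge> 0) \<and> (\<Sum>x\<in>UNIV. p x) = 1"

definition is_policy :: "('s::finite \<Rightarrow> 'a::finite \<Rightarrow> real) \<Rightarrow> bool" where
  "is_policy p \<longleftrightarrow> (\<forall>s. is_stoch (p s))"

fun stdist :: "('s::finite \<Rightarrow> 'a::finite \<Rightarrow> 's \<Rightarrow> real) \<Rightarrow> ('s \<Rightarrow> 'a \<Rightarrow> real)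
    \<Rightarrow> ('s \<Rightarrow> real) \<Rightarrow> nat \<Rightarrow> 's \<Rightarrow> real" where
  "stdist P p mu 0 = mu"
| "stdist P p mu (Suc t) =
     (\<lambda>s'. \<Sum>s\<in>UNIV. \<Sum>a\<in>UNIV. stdist P p mu t s * p s a * P s a s')"

definition value_from :: "('s::finite \<Rightarrow> 'a::finite \<Rightarrow> 's \<Rightarrow> real) \<Rightarrow> ('s \<Rightarrow> 'a \<Rightarrow> real)
    \<Rightarrow> real \<Rightarrow> ('s \<Rightarrow> 'a \<Rightarrow> real) \<Rightarrow> ('s \<Rightarrow> real) \<Rightarrow> real" where
  "value_from P r gam p mu =
     (\<Sum>t. gam ^ t * (\<Sum>s\<in>UNIV. stdist P p mu t s * (\<Sum>a\<in>UNIV. p s a * r s a)))"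

definition eta :: "('s::finite \<Rightarrow> 'a::finite \<Rightarrow> 's \<Rightarrow> real) \<Rightarrow> ('s \<Rightarrow> 'a \<Rightarrow> real)
    \<Rightarrow> real \<Rightarrow> ('s \<Rightarrow> real) \<Rightarrow> ('s \<Rightarrow> 'a \<Rightarrow> real) \<Rightarrow> real" where
  "eta P r gam rho0 p = value_from P r gam p rho0"

definition visit :: "('s::finite \<Rightarrow> 'a::finite \<Rightarrow> 's \<Rightarrow> real) \<Rightarrow> real \<Rightarrow> ('s \<Rightarrow> real)
    \<Rightarrow> ('s \<Rightarrow> 'a \<Rightarrow> real) \<Rightarrow> 's \<Rightarrow> real" where
  "visit P gam rho0 p s = (\<Sum>t. gam ^ t * stdist P p rho0 t s)"

definition Vfun :: "('s::finite \<Rightarrow> 'a::finite \<Rightarrow> 's \<Rightarrow> real) \<Rightarrow> ('s \<Rightarrow> 'a \<Rightarrow> real)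
    \<Rightarrow> real \<Rightarrow> ('s \<Rightarrow> 'a \<Rightarrow> real) \<Rightarrow> 's \<Rightarrow> real" where
  "Vfun P r gam p s = value_from P r gam p (\<lambda>s'. if s' = s then 1 else 0)"

text \<open>Q_pi(s,a): reward r(s,a) at time 0, then s_1 ~ P(.|s,a) and actions follow p
  (sum over l >= 1 of gam^l E[r(s_l,a_l)] = gam * value from the distribution of s_1).\<close>
definition Qfun :: "('s::finite \<Rightarrow> 'a::finite \<Rightarrow> 's \<Rightarrow> real) \<Rightarrow> ('s \<Rightarrow> 'a \<Rightarrow> real)
    \<Rightarrow> real \<Rightarrow> ('s \<Rightarrow> 'a \<Rightarrow> real) \<Rightarrow> 's \<Rightarrow> 'a \<Rightarrow> real" where
  "Qfun P r gam p s a = r s a + gam * value_from P r gam p (P s a)"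

definition Adv :: "('s::finite \<Rightarrow> 'a::finite \<Rightarrow> 's \<Rightarrow> real) \<Rightarrow> ('s \<Rightarrow> 'a \<Rightarrow> real)
    \<Rightarrow> real \<Rightarrow> ('s \<Rightarrow> 'a \<Rightarrow> real) \<Rightarrow> 's \<Rightarrow> 'a \<Rightarrow> real" where
  "Adv P r gam p s a = Qfun P r gam p s a - Vfun P r gam p s"

definition surrogate :: "('s::finite \<Rightarrow> 'a::finite \<Rightarrow> 's \<Rightarrow> real) \<Rightarrow> ('s \<Rightarrow> 'a \<Rightarrow> real)
    \<Rightarrow> real \<Rightarrow> ('s \<Rightarrow> real) \<Rightarrow> ('s \<Rightarrow> 'a \<Rightarrow> real) \<Rightarrow> ('s \<Rightarrow> 'a \<Rightarrow> real) \<Rightarrow> real" where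
  "surrogate P r gam rho0 p q1 = eta P r gam rho0 p +
     (\<Sum>s\<in>UNIV. visit P gam rho0 p s * (\<Sum>a\<in>UNIV. q1 s a * Adv P r gam p s a))"

definition pol_adv :: "('s::finite \<Rightarrow> 'a::finite \<Rightarrow> 's \<Rightarrow> real) \<Rightarrow> ('s \<Rightarrow> 'a \<Rightarrow> real)
    \<Rightarrow> real \<Rightarrow> ('s \<Rightarrow> real) \<Rightarrow> ('s \<Rightarrow> 'a \<Rightarrow> real) \<Rightarrow> ('s \<Rightarrow> 'a \<Rightarrow> real) \<Rightarrow> real" where
  "pol_adv P r gam rho0 p q1 =
     (\<Sum>s\<in>UNIV. visit P gam rho0 p s * (\<Sum>a\<in>UNIV. q1 s a * Adv P r gam p s a))"

text \<open>A*_pi = max over all policies of A_pi(q1) (the maximum is attained; written as Sup).\<close>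
definition Astar :: "('s::finite \<Rightarrow> 'a::finite \<Rightarrow> 's \<Rightarrow> real) \<Rightarrow> ('s \<Rightarrow> 'a \<Rightarrow> real)
    \<Rightarrow> real \<Rightarrow> ('s \<Rightarrow> real) \<Rightarrow> ('s \<Rightarrow> 'a \<Rightarrow> real) \<Rightarrow> real" where
  "Astar P r gam rho0 p = (SUP q1\<in>{q1. is_policy q1}. pol_adv P r gam rho0 p q1)"

definition dtv :: "('x::finite \<Rightarrow> real) \<Rightarrow> ('x \<Rightarrow> real) \<Rightarrow> real" where
  "dtv p q = (1/2) * (\<Sum>x\<in>UNIV. \<bar>p x - q x\<bar>)"

definition tr_feasible :: "('s::finite \<Rightarrow> 'a::finite \<Rightarrow> 's \<Rightarrow> real) \<Rightarrow> real \<Rightarrow> ('s \<Rightarrow> real)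
    \<Rightarrow> ('s \<Rightarrow> 'a \<Rightarrow> real) \<Rightarrow> real \<Rightarrow> ('s \<Rightarrow> 'a \<Rightarrow> real) \<Rightarrow> bool" where
  "tr_feasible P gam rho0 p delta q1 \<longleftrightarrow> is_policy q1 \<and>
     (\<Sum>s\<in>UNIV. visit P gam rho0 p s * dtv (p s) (q1 s)) \<le> delta"

definition tr_optimal :: "('s::finite \<Rightarrow> 'a::finite \<Rightarrow> 's \<Rightarrow> real) \<Rightarrow> ('s \<Rightarrow> 'a \<Rightarrow> real)
    \<Rightarrow> real \<Rightarrow> ('s \<Rightarrow> real) \<Rightarrow> ('s \<Rightarrow> 'a \<Rightarrow> real) \<Rightarrow> real \<Rightarrow> ('s \<Rightarrow> 'a \<Rightarrow> real) \<Rightarrow> bool" where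
  "tr_optimal P r gam rho0 p delta q1 \<longleftrightarrow> tr_feasible P gam rho0 p delta q1 \<and>
     (\<forall>q. tr_feasible P gam rho0 p delta q \<longrightarrow>
          surrogate P r gam rho0 p q \<le> surrogate P r gam rho0 p q1)"

definition tr_ratio :: "('s::finite \<Rightarrow> 'a::finite \<Rightarrow> 's \<Rightarrow> real) \<Rightarrow> ('s \<Rightarrow> 'a \<Rightarrow> real)
    \<Rightarrow> real \<Rightarrow> ('s \<Rightarrow> real) \<Rightarrow> ('s \<Rightarrow> 'a \<Rightarrow> real) \<Rightarrow> ('s \<Rightarrow> 'a \<Rightarrow> real) \<Rightarrow> real" where
  "tr_ratio P r gam rho0 p q1 =
     (eta P r gam rho0 q1 - eta P r gam rho0 p) /
     (surrogate P r gam rho0 p q1 - surrogate P r gam rho0 p p)"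

end

theory Submission
  imports Defs
begin

(* By the performance difference lemma, eta(q) - eta(p) = sum_s rho_q(s) sum_a q(a|s) A_p(s,a),
   so the surrogate L_p(q) differs from eta(q) only through rho_q - rho_p, which is linear in the
   trust-region distance: the model error is O(delta^2).  Mixing p with a policy nearly attaining
   A*_p shows that the model gain L_p(q) - L_p(p) is at least min(1, (1-gam) delta) A*_p / 2.
   Hence, if A*_{pi_k} stayed above some eps > 0, small radii would give ratios close to 1, so the
   radius would stay bounded below, infinitely many steps would be accepted and each would raise
   the bounded monotone sequence eta(pi_k) by a fixed amount, which is absurd.  Thus
   liminf A*_{pi_k} = 0, and since eta(pi_opt) - eta(p) <= A*_p / ((1-gam) min rho0), the monotone
   sequence eta(pi_k) converges to the optimal value. *)

section \<open>Stochastic vectors and elementary estimates\<close>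

lemma is_stoch_nonneg: "is_stoch p \<Longrightarrow> 0 \<le> p x"
  by (simp add: is_stoch_def)

lemma is_stoch_sum: "is_stoch p \<Longrightarrow> (\<Sum>x\<in>UNIV. p x) = 1"
  by (simp add: is_stoch_def)

lemma is_stoch_le_1:
  assumes "is_stoch p"
  shows "p x \<le> 1"
proof -
  have "p x \<le> (\<Sum>x\<in>UNIV. p x)"
    by (rule member_le_sum) (auto simp: is_stoch_nonneg[OF assms])
  thus ?thesis using is_stoch_sum[OF assms] by simp
qed

lemma abs_stoch_average_le:
  fixes f :: "'x::finite \<Rightarrow> real"
  assumes "is_stoch p" "\<And>x. \<bar>f x\<bar> \<le> B"
  shows "\<bar>\<Sum>x\<in>UNIV. p x * f x\<bar> \<le> B"
proof -
  have "\<bar>\<Sum>x\<in>UNIV. p x * f x\<bar> \<le> (\<Sum>x\<in>UNIV. p x * B)"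
    using assms by (intro order_trans[OF sum_abs] sum_mono)
      (simp add: abs_mult is_stoch_nonneg mult_left_mono)
  also have "\<dots> = B"
    using assms by (simp add: sum_distrib_right[symmetric] is_stoch_sum)
  finally show ?thesis .
qed

lemma stoch_average_le_Max:
  fixes f :: "'x::finite \<Rightarrow> real"
  assumes "is_stoch q"
  shows "(\<Sum>x\<in>UNIV. q x * f x) \<le> Max (range f)"
proof -
  have "(\<Sum>x\<in>UNIV. q x * f x) \<le> (\<Sum>x\<in>UNIV. q x * Max (range f))"
    using assms by (intro sum_mono mult_left_mono) (auto simp: is_stoch_nonneg)
  also have "\<dots> = Max (range f)"
    using assms by (simp add: sum_distrib_right[symmetric] is_stoch_sum)
  finally show ?thesis .
qed

lemma abs_weighted_sum_le:
  fixes w f :: "'x::finite \<Rightarrow> real"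
  assumes "\<And>x. 0 \<le> w x" "\<And>x. \<bar>f x\<bar> \<le> B"
  shows "\<bar>\<Sum>x\<in>UNIV. w x * f x\<bar> \<le> (\<Sum>x\<in>UNIV. w x) * B"
proof -
  have "\<bar>\<Sum>x\<in>UNIV. w x * f x\<bar> \<le> (\<Sum>x\<in>UNIV. w x * B)"
    using assms by (intro order_trans[OF sum_abs] sum_mono) (simp add: abs_mult mult_left_mono)
  thus ?thesis by (simp add: sum_distrib_right)
qed

lemma sum_rotate3:
  fixes f :: "'s::finite \<Rightarrow> 'a::finite \<Rightarrow> 't::finite \<Rightarrow> real"
  shows "(\<Sum>u\<in>UNIV. \<Sum>s\<in>UNIV. \<Sum>a\<in>UNIV. f s a u) = (\<Sum>s\<in>UNIV. \<Sum>a\<in>UNIV. \<Sum>u\<in>UNIV. f s a u)"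
proof -
  have "(\<Sum>u\<in>UNIV. \<Sum>s\<in>UNIV. \<Sum>a\<in>UNIV. f s a u) = (\<Sum>s\<in>UNIV. \<Sum>u\<in>UNIV. \<Sum>a\<in>UNIV. f s a u)"
    by (rule sum.swap)
  also have "\<dots> = (\<Sum>s\<in>UNIV. \<Sum>a\<in>UNIV. \<Sum>u\<in>UNIV. f s a u)"
    by (intro sum.cong refl sum.swap)
  finally show ?thesis .
qed

lemma dtv_nonneg: "0 \<le> dtv p q"
  unfolding dtv_def by (simp add: sum_nonneg)

lemma dtv_le_1:
  assumes "is_stoch p" "is_stoch q"
  shows "dtv p q \<le> 1"
proof -
  have "\<bar>p x - q x\<bar> \<le> p x + q x" for x
    using is_stoch_nonneg[OF assms(1), of x] is_stoch_nonneg[OF assms(2), of x] by linarith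
  hence "(\<Sum>x\<in>UNIV. \<bar>p x - q x\<bar>) \<le> (\<Sum>x\<in>UNIV. p x + q x)"
    by (rule sum_mono)
  also have "\<dots> = 2" using assms by (simp add: sum.distrib is_stoch_sum)
  finally show ?thesis unfolding dtv_def by simp
qed

lemma sum_abs_shifted_diff_le:
  fixes p q :: "'x::finite \<Rightarrow> real"
  assumes "is_stoch p" "is_stoch q" "0 \<le> d"
  shows "(\<Sum>x\<in>UNIV. \<bar>e * q x + d * (q x - p x)\<bar>) \<le> \<bar>e\<bar> + 2 * d * dtv p q"
proof -
  have "(\<Sum>x\<in>UNIV. \<bar>e * q x + d * (q x - p x)\<bar>) \<le> (\<Sum>x\<in>UNIV. \<bar>e\<bar> * q x + d * \<bar>p x - q x\<bar>)"
    using assms by (intro sum_mono order_trans[OF abs_triangle_ineq])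
      (simp add: abs_mult is_stoch_nonneg abs_minus_commute)
  also have "\<dots> = \<bar>e\<bar> + 2 * d * dtv p q"
    using assms(2) by (simp add: dtv_def sum.distrib sum_distrib_left[symmetric] is_stoch_sum)
  finally show ?thesis .
qed

lemma summable_geometric_weighted:
  fixes f :: "nat \<Rightarrow> real"
  assumes "0 \<le> g" "g < 1" "\<And>t. \<bar>f t\<bar> \<le> B"
  shows "summable (\<lambda>t. g^t * f t)"
proof (rule summable_comparison_test'[of "\<lambda>t. B * g^t" 0])
  show "summable (\<lambda>t. B * g^t)" using assms by (intro summable_mult summable_geometric) simp
  show "norm (g^t * f t) \<le> B * g^t" for t
    using mult_right_mono[OF assms(3)[of t], of "g^t"] assms by (simp add: abs_mult mult.commute)
qed

lemma abs_suminf_geometric_weighted_le: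
  fixes f :: "nat \<Rightarrow> real"
  assumes "0 \<le> g" "g < 1" "\<And>t. \<bar>f t\<bar> \<le> B"
  shows "\<bar>\<Sum>t. g^t * f t\<bar> \<le> B / (1 - g)"
proof -
  have abs_f: "\<bar>g^t * f t\<bar> \<le> B * g^t" for t
    using mult_right_mono[OF assms(3)[of t], of "g^t"] assms by (simp add: abs_mult mult.commute)
  have "summable (\<lambda>t. \<bar>g^t * f t\<bar>)"
    using summable_geometric_weighted[of g "\<lambda>t. \<bar>f t\<bar>" B] assms by (simp add: abs_mult)
  moreover have "summable (\<lambda>t. B * g^t)"
    using assms by (intro summable_mult summable_geometric) simp
  ultimately have "\<bar>\<Sum>t. g^t * f t\<bar> \<le> (\<Sum>t. B * g^t)"
    by (intro order_trans[OF summable_rabs] suminf_le abs_f)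
  also have "\<dots> = B / (1 - g)" using assms by (simp add: suminf_mult suminf_geometric)
  finally show ?thesis .
qed

lemma suminf_sum_finite_weighted:
  fixes f :: "'i::finite \<Rightarrow> nat \<Rightarrow> real"
  assumes "\<And>i. summable (f i)"
  shows "(\<Sum>n. \<Sum>i\<in>UNIV. c i * f i n) = (\<Sum>i\<in>UNIV. c i * suminf (f i))"
  using assms by (simp add: suminf_sum summable_mult suminf_mult)

definition dirac :: "'x \<Rightarrow> 'x \<Rightarrow> real" where
  "dirac u = (\<lambda>x. if x = u then 1 else 0)"

lemma is_stoch_dirac: "is_stoch (dirac (u::'x::finite))"
  by (simp add: is_stoch_def dirac_def)

lemma sum_dirac_mult:
  fixes f :: "'x::finite \<Rightarrow> real"
  shows "(\<Sum>x\<in>UNIV. dirac u x * f x) = f u"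
proof -
  have "dirac u x * f x = (if x = u then f x else 0)" for x
    by (simp add: dirac_def)
  thus ?thesis by simp
qed

lemma Vfun_eq_value_from_dirac: "Vfun P r gam p u = value_from P r gam p (dirac u)"
  by (simp add: Vfun_def dirac_def)

definition mean_reward :: "('s \<Rightarrow> 'a::finite \<Rightarrow> real) \<Rightarrow> ('s \<Rightarrow> 'a \<Rightarrow> real) \<Rightarrow> 's \<Rightarrow> real" where
  "mean_reward r p s = (\<Sum>a\<in>UNIV. p s a * r s a)"

definition mix :: "real \<Rightarrow> ('s \<Rightarrow> 'a \<Rightarrow> real) \<Rightarrow> ('s \<Rightarrow> 'a \<Rightarrow> real) \<Rightarrow> 's \<Rightarrow> 'a \<Rightarrow> real" where
  "mix t p q = (\<lambda>s a. (1 - t) * p s a + t * q s a)"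

lemma is_policy_mix:
  assumes "is_policy p" "is_policy q" "0 \<le> t" "t \<le> 1"
  shows "is_policy (mix t p q)"
  using assms unfolding is_policy_def is_stoch_def mix_def
  by (auto simp: sum.distrib sum_distrib_left[symmetric] intro!: add_nonneg_nonneg mult_nonneg_nonneg)

lemma dtv_mix:
  assumes "0 \<le> t"
  shows "dtv (p s) (mix t p q s) = t * dtv (p s) (q s)"
proof -
  have "p s a - mix t p q s a = t * (p s a - q s a)" for a
    by (simp add: mix_def algebra_simps)
  hence "\<bar>p s a - mix t p q s a\<bar> = t * \<bar>p s a - q s a\<bar>" for a
    using assms by (simp add: abs_mult)
  thus ?thesis unfolding dtv_def by (simp add: sum_distrib_left)
qed

lemma ex_policy: "\<exists>q :: 's::finite \<Rightarrow> 'a::finite \<Rightarrow> real. is_policy q"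
proof -
  have "is_policy (\<lambda>(s::'s) (a::'a). 1 / real CARD('a))"
    unfolding is_policy_def is_stoch_def by simp
  thus ?thesis by blast
qed

section \<open>Value functions of a finite discounted MDP\<close>

locale mdp =
  fixes P :: "'s::finite \<Rightarrow> 'a::finite \<Rightarrow> 's \<Rightarrow> real" and r :: "'s \<Rightarrow> 'a \<Rightarrow> real"
    and rho0 :: "'s \<Rightarrow> real" and gam :: real
  assumes trans: "\<And>s a. is_stoch (P s a)" and init: "is_stoch rho0"
    and init_pos: "\<And>s. 0 < rho0 s" and gam_pos: "0 < gam" and gam_less_1: "gam < 1"
begin

lemma is_stoch_stdist:
  assumes p: "is_policy p" and mu: "is_stoch mu"
  shows "is_stoch (stdist P p mu t)"
proof (induction t)
  case 0 then show ?case using mu by simp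
next
  case (Suc t)
  let ?x = "stdist P p mu t"
  have nonneg: "0 \<le> stdist P p mu (Suc t) s'" for s'
    using Suc p trans by (auto intro!: sum_nonneg simp: is_stoch_def is_policy_def)
  have "(\<Sum>s'\<in>UNIV. stdist P p mu (Suc t) s') = (\<Sum>s\<in>UNIV. \<Sum>a\<in>UNIV. \<Sum>s'\<in>UNIV. ?x s * p s a * P s a s')"
    by (simp add: sum_rotate3[of "\<lambda>s a s'. ?x s * p s a * P s a s'"])
  also have "\<dots> = (\<Sum>s\<in>UNIV. ?x s * (\<Sum>a\<in>UNIV. p s a))"
    using trans by (simp add: sum_distrib_left[symmetric] is_stoch_sum)
  also have "\<dots> = 1"
    using p Suc by (simp add: is_policy_def is_stoch_sum)
  finally show ?case using nonneg by (simp add: is_stoch_def)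
qed

lemma stdist_Suc_shift: "stdist P p mu (Suc t) = stdist P p (stdist P p mu (Suc 0)) t"
  by (induction t) simp_all

lemma stdist_linear: "stdist P p mu t s' = (\<Sum>u\<in>UNIV. mu u * stdist P p (dirac u) t s')"
proof (induction t arbitrary: s')
  case 0
  have "(\<Sum>u\<in>UNIV. mu u * dirac u s') = (\<Sum>u\<in>UNIV. dirac s' u * mu u)"
    by (intro sum.cong) (auto simp: dirac_def)
  then show ?case by (simp add: sum_dirac_mult)
next
  case (Suc t)
  have "stdist P p mu (Suc t) s' =
      (\<Sum>s\<in>UNIV. \<Sum>a\<in>UNIV. \<Sum>u\<in>UNIV. mu u * (stdist P p (dirac u) t s * p s a * P s a s'))"
    using Suc by (simp add: sum_distrib_right mult.assoc)
  also have "\<dots> = (\<Sum>u\<in>UNIV. \<Sum>s\<in>UNIV. \<Sum>a\<in>UNIV. mu u * (stdist P p (dirac u) t s * p s a * P s a s'))"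
    by (rule sum_rotate3[symmetric])
  also have "\<dots> = (\<Sum>u\<in>UNIV. mu u * stdist P p (dirac u) (Suc t) s')"
    by (simp add: sum_distrib_left mult.assoc)
  finally show ?case .
qed

definition Rmax :: real where
  "Rmax = (\<Sum>s\<in>UNIV. \<Sum>a\<in>UNIV. \<bar>r s a\<bar>)"

lemma abs_reward_le_Rmax: "\<bar>r s a\<bar> \<le> Rmax"
proof -
  have "\<bar>r s a\<bar> \<le> (\<Sum>a\<in>UNIV. \<bar>r s a\<bar>)" by (rule member_le_sum) auto
  also have "\<dots> \<le> Rmax" unfolding Rmax_def by (rule member_le_sum) (auto intro: sum_nonneg)
  finally show ?thesis .
qed

lemma Rmax_nonneg: "0 \<le> Rmax"
  using abs_reward_le_Rmax[of undefined undefined] by simp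

lemma abs_mean_reward_le_Rmax: "is_policy p \<Longrightarrow> \<bar>mean_reward r p s\<bar> \<le> Rmax"
  unfolding mean_reward_def is_policy_def by (rule abs_stoch_average_le) (auto simp: abs_reward_le_Rmax)

lemma value_from_mean_reward:
  "value_from P r gam p mu = (\<Sum>t. gam^t * (\<Sum>s\<in>UNIV. stdist P p mu t s * mean_reward r p s))"
  by (simp add: value_from_def mean_reward_def)

lemma abs_expected_reward_le_Rmax:
  assumes "is_policy p" "is_stoch mu"
  shows "\<bar>\<Sum>s\<in>UNIV. stdist P p mu t s * mean_reward r p s\<bar> \<le> Rmax"
  by (rule abs_stoch_average_le[OF is_stoch_stdist[OF assms]]) (rule abs_mean_reward_le_Rmax[OF assms(1)])

lemma summable_value_from:
  assumes "is_policy p" "is_stoch mu"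
  shows "summable (\<lambda>t. gam^t * (\<Sum>s\<in>UNIV. stdist P p mu t s * mean_reward r p s))"
  using gam_pos by (intro summable_geometric_weighted[OF _ gam_less_1 abs_expected_reward_le_Rmax[OF assms]]) simp

lemma abs_value_from_le:
  assumes "is_policy p" "is_stoch mu"
  shows "\<bar>value_from P r gam p mu\<bar> \<le> Rmax / (1 - gam)"
  unfolding value_from_mean_reward using gam_pos
  by (intro abs_suminf_geometric_weighted_le[OF _ gam_less_1 abs_expected_reward_le_Rmax[OF assms]]) simp

lemma value_from_linear:
  assumes p: "is_policy p"
  shows "value_from P r gam p mu = (\<Sum>u\<in>UNIV. mu u * Vfun P r gam p u)"
proof -
  let ?R = "\<lambda>u t. gam^t * (\<Sum>s\<in>UNIV. stdist P p (dirac u) t s * mean_reward r p s)"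
  have "gam^t * (\<Sum>s\<in>UNIV. stdist P p mu t s * mean_reward r p s) =
      (\<Sum>s\<in>UNIV. \<Sum>u\<in>UNIV. mu u * (gam^t * (stdist P p (dirac u) t s * mean_reward r p s)))" for t
    by (subst stdist_linear) (simp add: sum_distrib_left sum_distrib_right mult_ac)
  also have "\<dots> t = (\<Sum>u\<in>UNIV. mu u * ?R u t)" for t
    by (subst sum.swap) (simp add: sum_distrib_left)
  finally have "value_from P r gam p mu = (\<Sum>t. \<Sum>u\<in>UNIV. mu u * ?R u t)"
    unfolding value_from_mean_reward by simp
  also have "\<dots> = (\<Sum>u\<in>UNIV. mu u * Vfun P r gam p u)"
    by (simp add: suminf_sum_finite_weighted summable_value_from[OF p is_stoch_dirac]
        Vfun_eq_value_from_dirac value_from_mean_reward)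
  finally show ?thesis .
qed

lemma value_from_unfold:
  assumes p: "is_policy p" and mu: "is_stoch mu"
  shows "value_from P r gam p mu =
    (\<Sum>s\<in>UNIV. mu s * mean_reward r p s) + gam * value_from P r gam p (stdist P p mu (Suc 0))"
proof -
  let ?F = "\<lambda>t. gam^t * (\<Sum>s\<in>UNIV. stdist P p mu t s * mean_reward r p s)"
  have "(\<Sum>n. ?F (Suc n)) = value_from P r gam p mu - ?F 0"
    unfolding value_from_mean_reward by (rule suminf_split_head[OF summable_value_from[OF p mu]])
  moreover have "(\<Sum>n. ?F (Suc n)) = gam * value_from P r gam p (stdist P p mu (Suc 0))"
  proof -
    let ?mu1 = "stdist P p mu (Suc 0)"
    have "(\<Sum>n. ?F (Suc n)) = (\<Sum>n. gam * (gam^n * (\<Sum>s\<in>UNIV. stdist P p ?mu1 n s * mean_reward r p s)))"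
      by (subst stdist_Suc_shift) (simp add: mult.assoc)
    also have "\<dots> = gam * value_from P r gam p ?mu1"
      unfolding value_from_mean_reward
      by (rule suminf_mult[OF summable_value_from[OF p is_stoch_stdist[OF p mu]]])
    finally show ?thesis .
  qed
  ultimately show ?thesis by simp
qed

lemma Vfun_bellman:
  assumes p: "is_policy p"
  shows "Vfun P r gam p s =
    mean_reward r p s + gam * (\<Sum>a\<in>UNIV. p s a * (\<Sum>u\<in>UNIV. P s a u * Vfun P r gam p u))"
proof -
  have step: "stdist P p (dirac s) (Suc 0) u = (\<Sum>a\<in>UNIV. p s a * P s a u)" for u
    using sum_dirac_mult[of s "\<lambda>s'. \<Sum>a\<in>UNIV. p s' a * P s' a u"]
    by (simp add: sum_distrib_left mult.assoc)
  have "Vfun P r gam p s = value_from P r gam p (dirac s)"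
    by (rule Vfun_eq_value_from_dirac)
  also have "\<dots> = (\<Sum>x\<in>UNIV. dirac s x * mean_reward r p x)
      + gam * value_from P r gam p (stdist P p (dirac s) (Suc 0))"
    by (rule value_from_unfold[OF p is_stoch_dirac])
  also have "\<dots> = mean_reward r p s + gam * (\<Sum>u\<in>UNIV. stdist P p (dirac s) (Suc 0) u * Vfun P r gam p u)"
    by (simp only: sum_dirac_mult value_from_linear[OF p])
  also have "(\<Sum>u\<in>UNIV. stdist P p (dirac s) (Suc 0) u * Vfun P r gam p u) =
      (\<Sum>a\<in>UNIV. p s a * (\<Sum>u\<in>UNIV. P s a u * Vfun P r gam p u))"
    unfolding step sum_distrib_right by (subst sum.swap) (simp add: sum_distrib_left mult.assoc)
  finally show ?thesis .
qed

lemma Qfun_eq: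
  assumes "is_policy p"
  shows "Qfun P r gam p s a = r s a + gam * (\<Sum>u\<in>UNIV. P s a u * Vfun P r gam p u)"
  unfolding Qfun_def value_from_linear[OF assms] ..

lemma policy_average_Adv:
  assumes p: "is_policy p" and q: "is_policy q"
  shows "(\<Sum>a\<in>UNIV. q s a * Adv P r gam p s a) =
    mean_reward r q s + gam * (\<Sum>a\<in>UNIV. q s a * (\<Sum>u\<in>UNIV. P s a u * Vfun P r gam p u))
      - Vfun P r gam p s"
proof -
  have "(\<Sum>a\<in>UNIV. q s a * Adv P r gam p s a) =
      mean_reward r q s + gam * (\<Sum>a\<in>UNIV. q s a * (\<Sum>u\<in>UNIV. P s a u * Vfun P r gam p u))
      - (\<Sum>a\<in>UNIV. q s a) * Vfun P r gam p s"
    unfolding Adv_def Qfun_eq[OF p] mean_reward_def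
    by (simp add: algebra_simps sum.distrib sum_subtractf sum_distrib_left sum_distrib_right)
  thus ?thesis using q by (simp add: is_policy_def is_stoch_sum)
qed

lemma policy_average_own_Adv:
  assumes "is_policy p"
  shows "(\<Sum>a\<in>UNIV. p s a * Adv P r gam p s a) = 0"
  using policy_average_Adv[OF assms assms, of s] Vfun_bellman[OF assms, of s] by linarith

lemma abs_Vfun_le: "is_policy p \<Longrightarrow> \<bar>Vfun P r gam p s\<bar> \<le> Rmax / (1 - gam)"
  unfolding Vfun_eq_value_from_dirac by (rule abs_value_from_le[OF _ is_stoch_dirac])

lemma abs_Qfun_le:
  assumes p: "is_policy p"
  shows "\<bar>Qfun P r gam p s a\<bar> \<le> Rmax / (1 - gam)"
proof -
  have "\<bar>\<Sum>u\<in>UNIV. P s a u * Vfun P r gam p u\<bar> \<le> Rmax / (1 - gam)"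
    by (rule abs_stoch_average_le[OF trans abs_Vfun_le[OF p]])
  hence "\<bar>r s a\<bar> + gam * \<bar>\<Sum>u\<in>UNIV. P s a u * Vfun P r gam p u\<bar> \<le> Rmax + gam * (Rmax / (1 - gam))"
    using abs_reward_le_Rmax[of s a] gam_pos by (intro add_mono mult_left_mono) auto
  moreover have "\<bar>Qfun P r gam p s a\<bar> \<le> \<bar>r s a\<bar> + gam * \<bar>\<Sum>u\<in>UNIV. P s a u * Vfun P r gam p u\<bar>"
    unfolding Qfun_eq[OF p] using gam_pos by (simp add: abs_mult abs_triangle_ineq[THEN order_trans])
  ultimately have "\<bar>Qfun P r gam p s a\<bar> \<le> Rmax + gam * (Rmax / (1 - gam))"
    by linarith
  also have "\<dots> = Rmax / (1 - gam)" using gam_less_1 by (simp add: field_simps)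
  finally show ?thesis .
qed

definition Amax :: real where
  "Amax = 2 * Rmax / (1 - gam)"

lemma Amax_nonneg: "0 \<le> Amax"
  unfolding Amax_def using Rmax_nonneg gam_less_1 by simp

lemma abs_Adv_le_Amax: "is_policy p \<Longrightarrow> \<bar>Adv P r gam p s a\<bar> \<le> Amax"
  using abs_Qfun_le[of p s a] abs_Vfun_le[of p s] unfolding Adv_def Amax_def by simp

lemma abs_policy_average_Adv_le:
  assumes p: "is_policy p" and q: "is_policy q"
  shows "\<bar>\<Sum>a\<in>UNIV. q s a * Adv P r gam p s a\<bar> \<le> 2 * Amax * dtv (p s) (q s)"
proof -
  have "(\<Sum>a\<in>UNIV. q s a * Adv P r gam p s a) = (\<Sum>a\<in>UNIV. (q s a - p s a) * Adv P r gam p s a)"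
    using policy_average_own_Adv[OF p, of s] by (simp add: left_diff_distrib sum_subtractf)
  also have "\<bar>\<dots>\<bar> \<le> (\<Sum>a\<in>UNIV. \<bar>p s a - q s a\<bar> * Amax)"
    using abs_Adv_le_Amax[OF p]
    by (intro order_trans[OF sum_abs] sum_mono) (simp add: abs_mult abs_minus_commute mult_left_mono)
  also have "\<dots> = 2 * Amax * dtv (p s) (q s)"
    unfolding dtv_def by (simp add: sum_distrib_right[symmetric])
  finally show ?thesis .
qed

lemma summable_visit:
  assumes p: "is_policy p"
  shows "summable (\<lambda>t. gam^t * stdist P p rho0 t s)"
  using gam_pos is_stoch_stdist[OF p init]
  by (intro summable_geometric_weighted[OF _ gam_less_1, of _ 1]) (simp_all add: is_stoch_nonneg is_stoch_le_1)

lemma visit_nonneg: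
  assumes p: "is_policy p"
  shows "0 \<le> visit P gam rho0 p s"
  unfolding visit_def using gam_pos is_stoch_stdist[OF p init]
  by (intro suminf_nonneg[OF summable_visit[OF p]]) (simp add: is_stoch_nonneg)

lemma init_le_visit:
  assumes p: "is_policy p"
  shows "rho0 s \<le> visit P gam rho0 p s"
proof -
  have "(\<Sum>t\<in>{0}. gam^t * stdist P p rho0 t s) \<le> visit P gam rho0 p s"
    unfolding visit_def using gam_pos is_stoch_stdist[OF p init]
    by (intro sum_le_suminf[OF summable_visit[OF p]]) (simp_all add: is_stoch_nonneg)
  thus ?thesis by simp
qed

lemma sum_visit:
  assumes p: "is_policy p"
  shows "(\<Sum>s\<in>UNIV. visit P gam rho0 p s) = 1 / (1 - gam)"
proof -
  have "(\<Sum>s\<in>UNIV. visit P gam rho0 p s) = (\<Sum>t. \<Sum>s\<in>UNIV. 1 * (gam^t * stdist P p rho0 t s))"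
    unfolding visit_def by (subst suminf_sum_finite_weighted) (use summable_visit[OF p] in auto)
  also have "\<dots> = (\<Sum>t. gam^t)"
    using is_stoch_stdist[OF p init] by (simp add: sum_distrib_left[symmetric] is_stoch_sum)
  also have "\<dots> = 1 / (1 - gam)" using gam_pos gam_less_1 by (simp add: suminf_geometric)
  finally show ?thesis .
qed

lemma visit_le:
  assumes p: "is_policy p"
  shows "visit P gam rho0 p s \<le> 1 / (1 - gam)"
proof -
  have "visit P gam rho0 p s \<le> (\<Sum>s\<in>UNIV. visit P gam rho0 p s)"
    by (rule member_le_sum) (auto simp: visit_nonneg[OF p])
  thus ?thesis using sum_visit[OF p] by simp
qed

lemma eta_eq_visit_mean_reward:
  assumes p: "is_policy p"
  shows "eta P r gam rho0 p = (\<Sum>s\<in>UNIV. visit P gam rho0 p s * mean_reward r p s)"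
proof -
  have "eta P r gam rho0 p = (\<Sum>t. \<Sum>s\<in>UNIV. mean_reward r p s * (gam^t * stdist P p rho0 t s))"
    unfolding eta_def value_from_mean_reward by (simp add: sum_distrib_left mult_ac)
  also have "\<dots> = (\<Sum>s\<in>UNIV. mean_reward r p s * visit P gam rho0 p s)"
    unfolding visit_def by (rule suminf_sum_finite_weighted) (rule summable_visit[OF p])
  finally show ?thesis by (simp add: mult.commute)
qed

lemma eta_eq_init_Vfun:
  assumes "is_policy p"
  shows "eta P r gam rho0 p = (\<Sum>s\<in>UNIV. rho0 s * Vfun P r gam p s)"
  unfolding eta_def by (rule value_from_linear[OF assms])

lemma visit_balance:
  assumes p: "is_policy p"
  shows "visit P gam rho0 p u =
    rho0 u + gam * (\<Sum>s\<in>UNIV. \<Sum>a\<in>UNIV. visit P gam rho0 p s * p s a * P s a u)"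
proof -
  let ?F = "\<lambda>t. gam^t * stdist P p rho0 t u"
  have shift: "(\<Sum>n. ?F (Suc n)) = visit P gam rho0 p u - ?F 0"
    unfolding visit_def by (rule suminf_split_head[OF summable_visit[OF p]])
  have "(\<Sum>n. ?F (Suc n)) =
      (\<Sum>n. \<Sum>s\<in>UNIV. (gam * (\<Sum>a\<in>UNIV. p s a * P s a u)) * (gam^n * stdist P p rho0 n s))"
    by (simp add: sum_distrib_left sum_distrib_right mult_ac)
  also have "\<dots> = (\<Sum>s\<in>UNIV. (gam * (\<Sum>a\<in>UNIV. p s a * P s a u)) * visit P gam rho0 p s)"
    unfolding visit_def by (rule suminf_sum_finite_weighted) (rule summable_visit[OF p])
  finally show ?thesis
    using shift by (simp add: sum_distrib_left sum_distrib_right mult_ac)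
qed

lemma performance_difference:
  assumes p: "is_policy p" and q: "is_policy q"
  shows "eta P r gam rho0 q - eta P r gam rho0 p =
    (\<Sum>s\<in>UNIV. visit P gam rho0 q s * (\<Sum>a\<in>UNIV. q s a * Adv P r gam p s a))"
proof -
  define V where "V = Vfun P r gam p"
  define d where "d = visit P gam rho0 q"
  define W where "W s = (\<Sum>a\<in>UNIV. q s a * (\<Sum>u\<in>UNIV. P s a u * V u))" for s
  have "(\<Sum>s\<in>UNIV. d s * W s) = (\<Sum>s\<in>UNIV. \<Sum>a\<in>UNIV. \<Sum>u\<in>UNIV. d s * q s a * P s a u * V u)"
    unfolding W_def by (simp add: sum_distrib_left mult.assoc)
  also have "\<dots> = (\<Sum>u\<in>UNIV. \<Sum>s\<in>UNIV. \<Sum>a\<in>UNIV. d s * q s a * P s a u * V u)"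
    by (rule sum_rotate3[symmetric])
  finally have W_transport: "(\<Sum>s\<in>UNIV. d s * W s) =
      (\<Sum>u\<in>UNIV. (\<Sum>s\<in>UNIV. \<Sum>a\<in>UNIV. d s * q s a * P s a u) * V u)"
    by (simp add: sum_distrib_right)
  have flow: "gam * (\<Sum>s\<in>UNIV. \<Sum>a\<in>UNIV. d s * q s a * P s a u) = d u - rho0 u" for u
    using visit_balance[OF q, of u] unfolding d_def by simp
  have "gam * ((\<Sum>s\<in>UNIV. \<Sum>a\<in>UNIV. d s * q s a * P s a u) * V u) = (d u - rho0 u) * V u" for u
    unfolding mult.assoc[symmetric] flow ..
  hence "gam * (\<Sum>s\<in>UNIV. d s * W s) = (\<Sum>u\<in>UNIV. (d u - rho0 u) * V u)"
    unfolding W_transport sum_distrib_left by (rule sum.cong[OF refl])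
  moreover have "(\<Sum>s\<in>UNIV. d s * (\<Sum>a\<in>UNIV. q s a * Adv P r gam p s a)) =
      (\<Sum>s\<in>UNIV. d s * mean_reward r q s) + gam * (\<Sum>s\<in>UNIV. d s * W s) - (\<Sum>s\<in>UNIV. d s * V s)"
    unfolding policy_average_Adv[OF p q] W_def V_def
    by (simp add: algebra_simps sum.distrib sum_subtractf sum_distrib_left)
  ultimately show ?thesis
    unfolding eta_eq_visit_mean_reward[OF q] eta_eq_init_Vfun[OF p] d_def[symmetric] V_def[symmetric]
    by (simp add: left_diff_distrib sum_subtractf)
qed

lemma surrogate_eq_eta_plus_pol_adv:
  "surrogate P r gam rho0 p q = eta P r gam rho0 p + pol_adv P r gam rho0 p q"
  unfolding surrogate_def pol_adv_def ..

lemma pol_adv_self: "is_policy p \<Longrightarrow> pol_adv P r gam rho0 p p = 0"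
  unfolding pol_adv_def by (simp add: policy_average_own_Adv)

lemma pol_adv_mix:
  assumes p: "is_policy p"
  shows "pol_adv P r gam rho0 p (mix t p q) = t * pol_adv P r gam rho0 p q"
proof -
  have "(\<Sum>a\<in>UNIV. mix t p q s a * Adv P r gam p s a) =
      (1 - t) * (\<Sum>a\<in>UNIV. p s a * Adv P r gam p s a) + t * (\<Sum>a\<in>UNIV. q s a * Adv P r gam p s a)" for s
    unfolding mix_def by (simp add: sum.distrib sum_distrib_left distrib_right mult.assoc)
  thus ?thesis
    unfolding pol_adv_def by (simp add: policy_average_own_Adv[OF p] sum_distrib_left mult_ac)
qed

lemma abs_pol_adv_le:
  assumes p: "is_policy p" and q: "is_policy q"
  shows "\<bar>pol_adv P r gam rho0 p q\<bar> \<le> Amax / (1 - gam)"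
proof -
  have "\<bar>pol_adv P r gam rho0 p q\<bar> \<le> (\<Sum>s\<in>UNIV. visit P gam rho0 p s) * Amax"
    unfolding pol_adv_def using q abs_Adv_le_Amax[OF p]
    by (intro abs_weighted_sum_le visit_nonneg[OF p] abs_stoch_average_le) (auto simp: is_policy_def)
  thus ?thesis using sum_visit[OF p] by simp
qed

lemma bdd_above_pol_adv:
  assumes "is_policy p"
  shows "bdd_above (pol_adv P r gam rho0 p ` {q. is_policy q})"
  using abs_pol_adv_le[OF assms] by (intro bdd_aboveI[of _ "Amax / (1 - gam)"]) (auto simp: abs_le_iff)

lemma pol_adv_le_Astar:
  assumes "is_policy p" "is_policy q"
  shows "pol_adv P r gam rho0 p q \<le> Astar P r gam rho0 p"
  unfolding Astar_def using assms by (intro cSUP_upper bdd_above_pol_adv) auto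

lemma less_Astar_imp_ex_policy:
  assumes "is_policy p" "y < Astar P r gam rho0 p"
  shows "\<exists>q. is_policy q \<and> y < pol_adv P r gam rho0 p q"
proof -
  have "{q :: 's \<Rightarrow> 'a \<Rightarrow> real. is_policy q} \<noteq> {}" using ex_policy by auto
  from less_cSUP_iff[OF this bdd_above_pol_adv[OF assms(1)]] show ?thesis
    using assms(2) unfolding Astar_def by auto
qed

section \<open>Model gain, model error and suboptimality\<close>

lemma surrogate_improvement_ge:
  assumes p: "is_policy p" and dl: "0 < dl" and opt: "tr_optimal P r gam rho0 p dl q1"
    and A: "0 < Astar P r gam rho0 p"
  shows "min 1 ((1 - gam) * dl) * Astar P r gam rho0 p / 2
    \<le> surrogate P r gam rho0 p q1 - surrogate P r gam rho0 p p"
proof -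
  obtain q where q: "is_policy q" and qA: "Astar P r gam rho0 p / 2 < pol_adv P r gam rho0 p q"
    using less_Astar_imp_ex_policy[OF p, of "Astar P r gam rho0 p / 2"] A by auto
  define t where "t = min 1 ((1 - gam) * dl)"
  have t: "0 < t" "t \<le> 1" using dl gam_less_1 by (auto simp: t_def)
  have "(\<Sum>s\<in>UNIV. visit P gam rho0 p s * dtv (p s) (mix t p q s)) =
      t * (\<Sum>s\<in>UNIV. visit P gam rho0 p s * dtv (p s) (q s))"
    using t by (simp add: dtv_mix sum_distrib_left mult_ac)
  also have "\<dots> \<le> t * (\<Sum>s\<in>UNIV. visit P gam rho0 p s * 1)"
    using p q t by (intro mult_left_mono sum_mono dtv_le_1) (auto simp: is_policy_def visit_nonneg)
  also have "\<dots> = t / (1 - gam)"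
    using sum_visit[OF p] by simp
  also have "\<dots> \<le> dl"
    using gam_less_1 by (simp add: t_def pos_divide_le_eq mult.commute)
  finally have "tr_feasible P gam rho0 p dl (mix t p q)"
    using is_policy_mix[OF p q] t by (simp add: tr_feasible_def)
  hence "surrogate P r gam rho0 p (mix t p q) \<le> surrogate P r gam rho0 p q1"
    using opt by (simp add: tr_optimal_def)
  hence "t * pol_adv P r gam rho0 p q \<le> surrogate P r gam rho0 p q1 - surrogate P r gam rho0 p p"
    by (simp add: surrogate_eq_eta_plus_pol_adv pol_adv_mix[OF p] pol_adv_self[OF p])
  moreover have "t * Astar P r gam rho0 p / 2 \<le> t * pol_adv P r gam rho0 p q"
    using qA t by simp
  ultimately show ?thesis unfolding t_def by linarith
qed

definition rho_min :: real where
  "rho_min = Min (range rho0)"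

lemma rho_min_pos: "0 < rho_min"
  unfolding rho_min_def using init_pos by (subst Min_gr_iff) auto

lemma rho_min_le: "rho_min \<le> rho0 s"
  unfolding rho_min_def by (rule Min_le) auto

text \<open>The distribution mismatch between any two policies is bounded because every state
  carries initial mass at least rho_min.\<close>

lemma visit_le_mismatch:
  assumes p: "is_policy p" and q: "is_policy q"
  shows "visit P gam rho0 q s \<le> visit P gam rho0 p s / ((1 - gam) * rho_min)"
proof -
  have "1 \<le> visit P gam rho0 p s / rho_min"
    using rho_min_le[of s] init_le_visit[OF p, of s] rho_min_pos by (simp add: le_divide_eq)
  hence "1 / (1 - gam) \<le> (visit P gam rho0 p s / rho_min) / (1 - gam)"
    using gam_less_1 by (intro divide_right_mono) auto
  thus ?thesis using visit_le[OF q, of s] by (simp add: divide_divide_eq_left mult.commute)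
qed

lemma sum_visit_Max_Adv_le_Astar:
  assumes p: "is_policy p"
  shows "(\<Sum>s\<in>UNIV. visit P gam rho0 p s * Max (range (Adv P r gam p s))) \<le> Astar P r gam rho0 p"
proof -
  have "Max (range (Adv P r gam p s)) \<in> range (Adv P r gam p s)" for s
    by (rule Max_in) auto
  hence "\<forall>s. \<exists>a. Adv P r gam p s a = Max (range (Adv P r gam p s))"
    by (metis rangeE)
  then obtain greedy where greedy: "\<And>s. Adv P r gam p s (greedy s) = Max (range (Adv P r gam p s))"
    by metis
  have "(\<Sum>s\<in>UNIV. visit P gam rho0 p s * Max (range (Adv P r gam p s))) =
      pol_adv P r gam rho0 p (\<lambda>s. dirac (greedy s))"
    unfolding pol_adv_def by (simp add: sum_dirac_mult greedy)
  also have "\<dots> \<le> Astar P r gam rho0 p"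
    by (rule pol_adv_le_Astar[OF p]) (simp add: is_policy_def is_stoch_dirac)
  finally show ?thesis .
qed

lemma eta_suboptimality_le:
  assumes p: "is_policy p" and q: "is_policy q"
  shows "eta P r gam rho0 q - eta P r gam rho0 p \<le> Astar P r gam rho0 p / ((1 - gam) * rho_min)"
proof -
  define M where "M s = Max (range (Adv P r gam p s))" for s
  have avg_le_M: "(\<Sum>a\<in>UNIV. q' s a * Adv P r gam p s a) \<le> M s" if "is_policy q'" for q' s
    using that unfolding M_def is_policy_def by (intro stoch_average_le_Max) simp
  have M_nonneg: "0 \<le> M s" for s
    using avg_le_M[OF p, of s] policy_average_own_Adv[OF p, of s] by simp
  have term_le: "visit P gam rho0 q s * (\<Sum>a\<in>UNIV. q s a * Adv P r gam p s a)
      \<le> visit P gam rho0 p s / ((1 - gam) * rho_min) * M s" for s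
    using visit_nonneg[OF q, of s] M_nonneg[of s] visit_le_mismatch[OF p q, of s] avg_le_M[OF q, of s]
    by (meson mult_left_mono mult_right_mono order_trans)
  have "eta P r gam rho0 q - eta P r gam rho0 p =
      (\<Sum>s\<in>UNIV. visit P gam rho0 q s * (\<Sum>a\<in>UNIV. q s a * Adv P r gam p s a))"
    by (rule performance_difference[OF p q])
  also have "\<dots> \<le> (\<Sum>s\<in>UNIV. visit P gam rho0 p s / ((1 - gam) * rho_min) * M s)"
    by (rule sum_mono[OF term_le])
  also have "\<dots> = (\<Sum>s\<in>UNIV. visit P gam rho0 p s * M s) / ((1 - gam) * rho_min)"
    by (simp add: sum_divide_distrib)
  also have "\<dots> \<le> Astar P r gam rho0 p / ((1 - gam) * rho_min)"
    using sum_visit_Max_Adv_le_Astar[OF p] gam_less_1 rho_min_pos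
    unfolding M_def by (intro divide_right_mono) auto
  finally show ?thesis .
qed

lemma visit_diff_eq:
  assumes p: "is_policy p" and q: "is_policy q"
  defines "e \<equiv> \<lambda>s. visit P gam rho0 q s - visit P gam rho0 p s"
  shows "e u = gam * (\<Sum>s\<in>UNIV. \<Sum>a\<in>UNIV.
    (e s * q s a + visit P gam rho0 p s * (q s a - p s a)) * P s a u)"
proof -
  have "(\<Sum>s\<in>UNIV. \<Sum>a\<in>UNIV. (e s * q s a + visit P gam rho0 p s * (q s a - p s a)) * P s a u) =
      (\<Sum>s\<in>UNIV. \<Sum>a\<in>UNIV. visit P gam rho0 q s * q s a * P s a u)
      - (\<Sum>s\<in>UNIV. \<Sum>a\<in>UNIV. visit P gam rho0 p s * p s a * P s a u)"
    unfolding e_def by (simp add: algebra_simps sum_subtractf)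
  thus ?thesis
    using visit_balance[OF p, of u] visit_balance[OF q, of u] unfolding e_def
    by (simp add: right_diff_distrib)
qed

lemma sum_abs_visit_diff_le:
  assumes p: "is_policy p" and q: "is_policy q"
  shows "(\<Sum>u\<in>UNIV. \<bar>visit P gam rho0 q u - visit P gam rho0 p u\<bar>)
    \<le> 2 * gam / (1 - gam) * (\<Sum>s\<in>UNIV. visit P gam rho0 p s * dtv (p s) (q s))"
proof -
  define e where "e s = visit P gam rho0 q s - visit P gam rho0 p s" for s
  define X where "X s a = e s * q s a + visit P gam rho0 p s * (q s a - p s a)" for s a
  define E where "E = (\<Sum>u\<in>UNIV. \<bar>e u\<bar>)"
  define D where "D = (\<Sum>s\<in>UNIV. visit P gam rho0 p s * dtv (p s) (q s))"
  have "\<bar>e u\<bar> \<le> gam * (\<Sum>s\<in>UNIV. \<Sum>a\<in>UNIV. \<bar>X s a\<bar> * P s a u)" for u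
  proof -
    have "\<bar>\<Sum>s\<in>UNIV. \<Sum>a\<in>UNIV. X s a * P s a u\<bar> \<le> (\<Sum>s\<in>UNIV. \<Sum>a\<in>UNIV. \<bar>X s a\<bar> * P s a u)"
      using trans by (intro order_trans[OF sum_abs] sum_mono order_trans[OF sum_abs] eq_refl)
        (simp add: abs_mult is_stoch_nonneg)
    thus ?thesis
      using visit_diff_eq[OF p q, of u] gam_pos unfolding e_def X_def by (simp add: abs_mult)
  qed
  hence "E \<le> (\<Sum>u\<in>UNIV. gam * (\<Sum>s\<in>UNIV. \<Sum>a\<in>UNIV. \<bar>X s a\<bar> * P s a u))"
    unfolding E_def by (rule sum_mono)
  also have "\<dots> = gam * (\<Sum>s\<in>UNIV. \<Sum>a\<in>UNIV. \<Sum>u\<in>UNIV. \<bar>X s a\<bar> * P s a u)"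
    by (simp add: sum_distrib_left[symmetric] sum_rotate3[of "\<lambda>s a u. \<bar>X s a\<bar> * P s a u"])
  also have "\<dots> = gam * (\<Sum>s\<in>UNIV. \<Sum>a\<in>UNIV. \<bar>X s a\<bar>)"
    using trans by (simp add: sum_distrib_left[symmetric] is_stoch_sum)
  also have "\<dots> \<le> gam * (\<Sum>s\<in>UNIV. \<bar>e s\<bar> + 2 * visit P gam rho0 p s * dtv (p s) (q s))"
    unfolding X_def using gam_pos p q visit_nonneg[OF p]
    by (intro mult_left_mono sum_mono sum_abs_shifted_diff_le) (auto simp: is_policy_def)
  also have "\<dots> = gam * (E + 2 * D)"
    unfolding E_def D_def by (simp add: sum.distrib sum_distrib_left mult.assoc)
  finally have "E * (1 - gam) \<le> 2 * gam * D"
    by (simp add: algebra_simps)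
  thus ?thesis
    using gam_less_1 unfolding E_def D_def e_def by (simp add: pos_le_divide_eq mult.commute)
qed

lemma dtv_le_weighted_dtv:
  assumes p: "is_policy p"
  shows "dtv (p s) (q s) \<le> (\<Sum>s\<in>UNIV. visit P gam rho0 p s * dtv (p s) (q s)) / rho_min"
proof -
  have "rho_min * dtv (p s) (q s) \<le> visit P gam rho0 p s * dtv (p s) (q s)"
    using rho_min_le[of s] init_le_visit[OF p, of s] dtv_nonneg by (intro mult_right_mono) auto
  also have "\<dots> \<le> (\<Sum>s\<in>UNIV. visit P gam rho0 p s * dtv (p s) (q s))"
    by (rule member_le_sum) (auto simp: visit_nonneg[OF p] dtv_nonneg)
  finally show ?thesis
    using rho_min_pos by (simp add: pos_le_divide_eq mult.commute)
qed

text \<open>The surrogate is exact up to the change of visitation frequencies, which is itself of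
  first order in the trust-region distance; hence the error is of second order.\<close>

lemma abs_eta_sub_surrogate_le:
  assumes p: "is_policy p" and q: "is_policy q"
  defines "D \<equiv> \<Sum>s\<in>UNIV. visit P gam rho0 p s * dtv (p s) (q s)"
  shows "\<bar>eta P r gam rho0 q - surrogate P r gam rho0 p q\<bar>
    \<le> 4 * gam * Amax / ((1 - gam) * rho_min) * D^2"
proof -
  define e where "e s = visit P gam rho0 q s - visit P gam rho0 p s" for s
  define g where "g s = (\<Sum>a\<in>UNIV. q s a * Adv P r gam p s a)" for s
  have D_nonneg: "0 \<le> D"
    unfolding D_def by (intro sum_nonneg mult_nonneg_nonneg visit_nonneg[OF p] dtv_nonneg)
  have g_le: "\<bar>g s\<bar> \<le> 2 * Amax * (D / rho_min)" for s
    using abs_policy_average_Adv_le[OF p q, of s] dtv_le_weighted_dtv[OF p, of s] Amax_nonneg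
    unfolding g_def D_def by (meson mult_left_mono order_trans zero_le_mult_iff zero_le_numeral)
  have "eta P r gam rho0 q - surrogate P r gam rho0 p q = (\<Sum>s\<in>UNIV. e s * g s)"
    using performance_difference[OF p q] unfolding surrogate_eq_eta_plus_pol_adv pol_adv_def e_def g_def
    by (simp add: left_diff_distrib sum_subtractf)
  also have "\<bar>\<dots>\<bar> \<le> (\<Sum>s\<in>UNIV. \<bar>e s\<bar> * (2 * Amax * (D / rho_min)))"
  proof (intro order_trans[OF sum_abs] sum_mono)
    show "\<bar>e s * g s\<bar> \<le> \<bar>e s\<bar> * (2 * Amax * (D / rho_min))" for s
      unfolding abs_mult by (rule mult_left_mono[OF g_le]) simp
  qed
  also have "\<dots> = (\<Sum>s\<in>UNIV. \<bar>e s\<bar>) * (2 * Amax * (D / rho_min))"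
    by (rule sum_distrib_right[symmetric])
  also have "\<dots> \<le> (2 * gam / (1 - gam) * D) * (2 * Amax * (D / rho_min))"
    using sum_abs_visit_diff_le[OF p q] Amax_nonneg D_nonneg rho_min_pos
    unfolding e_def D_def by (intro mult_right_mono) auto
  also have "\<dots> = 4 * gam * Amax / ((1 - gam) * rho_min) * D^2"
    using gam_less_1 rho_min_pos by (simp add: power2_eq_square field_simps)
  finally show ?thesis .
qed

end

section \<open>Convergence of abstract trust-region iterations\<close>

lemma liminf_eq_0_if_frequently_small:
  fixes x :: "nat \<Rightarrow> real"
  assumes nonneg: "\<And>k. 0 \<le> x k" and small: "\<And>\<epsilon> K. 0 < \<epsilon> \<Longrightarrow> \<exists>k\<ge>K. x k < \<epsilon>"
  shows "liminf (\<lambda>k. ereal (x k)) = 0"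
proof (rule antisym)
  show "liminf (\<lambda>k. ereal (x k)) \<le> 0"
  proof (rule ccontr)
    assume "\<not> ?thesis"
    hence "0 < liminf (\<lambda>k. ereal (x k))" by simp
    then obtain y where y: "0 < ereal y" "ereal y < liminf (\<lambda>k. ereal (x k))"
      using ereal_dense2 by blast
    have "eventually (\<lambda>k. ereal y < ereal (x k)) sequentially"
      by (rule less_LiminfD[OF y(2)])
    then obtain K where K: "\<And>k. K \<le> k \<Longrightarrow> y < x k"
      by (auto simp: eventually_sequentially)
    obtain k where "K \<le> k" "x k < y" using small[of y K] y(1) by auto
    thus False using K[of k] by simp
  qed
  show "0 \<le> liminf (\<lambda>k. ereal (x k))"
    by (rule Liminf_bounded) (simp add: nonneg)
qed

lemma incseq_tendsto_if_approaches:
  fixes f :: "nat \<Rightarrow> real"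
  assumes inc: "incseq f" and le: "\<And>k. f k \<le> L" and near: "\<And>\<epsilon>. 0 < \<epsilon> \<Longrightarrow> \<exists>k. L - \<epsilon> < f k"
  shows "f \<longlonglongrightarrow> L"
proof (rule LIMSEQ_I)
  fix \<epsilon> :: real assume "0 < \<epsilon>"
  then obtain k where "L - \<epsilon> < f k" using near by blast
  hence "norm (f n - L) < \<epsilon>" if "k \<le> n" for n
    using incseqD[OF inc that] le[of n] by simp
  thus "\<exists>k. \<forall>n\<ge>k. norm (f n - L) < \<epsilon>" by blast
qed

lemma unbounded_if_frequent_increase:
  fixes f :: "nat \<Rightarrow> real"
  assumes inc: "incseq f" and c: "0 < c" and jump: "\<And>k. \<exists>j\<ge>k. f j + c \<le> f (Suc j)"
  shows "\<not> bdd_above (range f)"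
proof
  assume "bdd_above (range f)"
  then obtain M where M: "\<And>k. f k \<le> M" by (auto simp: bdd_above_def)
  obtain n where n: "M - f 0 < real n * c" using ex_less_of_nat_mult[OF c] by blast
  have "\<exists>k. f 0 + real n * c \<le> f k" for n
  proof (induction n)
    case (Suc n)
    then obtain k where "f 0 + real n * c \<le> f k" by blast
    moreover obtain j where "k \<le> j" "f j + c \<le> f (Suc j)" using jump by blast
    ultimately have "f 0 + real (Suc n) * c \<le> f (Suc j)"
      using incseqD[OF inc \<open>k \<le> j\<close>] by (simp add: algebra_simps)
    thus ?case by blast
  qed (rule exI[of _ 0], simp)
  then obtain k where "f 0 + real n * c \<le> f k" by blast
  thus False using M[of k] n by linarith
qed

locale trust_region_radius =
  fixes beta0 beta1 g1 g2 g3 :: real and rt delta :: "nat \<Rightarrow> real"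
  assumes beta0_less_beta1: "beta0 < beta1"
    and g3_pos: "0 < g3" and g3_less_1: "g3 < 1" and g3_le_g2: "g3 \<le> g2" and g1_ge_1: "1 \<le> g1"
    and delta_0_pos: "0 < delta 0"
    and radius_update: "\<And>k. delta (Suc k) =
      (if beta1 \<le> rt k then g1 * delta k else if beta0 \<le> rt k then g2 * delta k else g3 * delta k)"
begin

lemma radius_Suc_ge:
  assumes "0 < delta k"
  shows "g3 * delta k \<le> delta (Suc k)"
proof -
  have "g3 * delta k \<le> g1 * delta k" "g3 * delta k \<le> g2 * delta k"
    using assms g3_le_g2 g3_less_1 g1_ge_1 by (simp_all add: mult_right_mono)
  thus ?thesis by (simp add: radius_update)
qed

lemma delta_pos: "0 < delta k"
proof (induction k)
  case (Suc k)
  have "0 < g3 * delta k" using Suc g3_pos by simp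
  thus ?case using radius_Suc_ge[OF Suc] by linarith
qed (rule delta_0_pos)

lemma radius_bounded_below:
  assumes ds: "0 < ds" and very_successful: "\<And>k. K \<le> k \<Longrightarrow> delta k \<le> ds \<Longrightarrow> beta1 \<le> rt k"
  shows "\<exists>m>0. \<forall>k\<ge>K. m \<le> delta k"
proof -
  define m where "m = min (delta K) (g3 * ds)"
  have m_pos: "0 < m" using delta_pos g3_pos ds by (simp add: m_def)
  have m_le: "m \<le> delta (K + n)" for n
  proof (induction n)
    case (Suc n)
    show ?case
    proof (cases "delta (K + n) \<le> ds")
      case True
      hence "delta (Suc (K + n)) = g1 * delta (K + n)"
        using very_successful[of "K + n"] by (simp add: radius_update)
      moreover have "delta (K + n) \<le> g1 * delta (K + n)"
        using g1_ge_1 delta_pos[of "K + n"] by simp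
      ultimately show ?thesis using Suc by simp
    next
      case False
      hence "m \<le> g3 * delta (K + n)" using g3_pos by (simp add: m_def min.coboundedI2)
      thus ?thesis using radius_Suc_ge[OF delta_pos, of "K + n"] by simp
    qed
  qed (simp add: m_def)
  have "m \<le> delta k" if "K \<le> k" for k
    using m_le[of "k - K"] that by simp
  thus ?thesis using m_pos by blast
qed

text \<open>Without accepted steps the radius shrinks geometrically.\<close>

lemma frequently_accepted:
  assumes m: "0 < m" and lower: "\<And>k. K \<le> k \<Longrightarrow> m \<le> delta k" and "K \<le> k"
  shows "\<exists>j\<ge>k. beta0 \<le> rt j"
proof (rule ccontr)
  assume "\<not> ?thesis"
  hence rejected: "\<And>j. k \<le> j \<Longrightarrow> rt j < beta0" by auto
  have "delta (k + n) = g3^n * delta k" for n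
  proof (induction n)
    case (Suc n)
    have "rt (k + n) < beta1" using rejected[of "k + n"] beta0_less_beta1 by simp
    thus ?case using rejected[of "k + n"] Suc by (simp add: radius_update)
  qed simp
  moreover obtain n where "g3^n < m / delta k"
    using real_arch_pow_inv[of "m / delta k" g3] m delta_pos g3_less_1 by auto
  ultimately have "delta (k + n) < m" using delta_pos[of k] by (simp add: less_divide_eq)
  thus False using lower[of "k + n"] \<open>K \<le> k\<close> by simp
qed

end

locale trust_region_iteration = trust_region_radius +
  fixes f A :: "nat \<Rightarrow> real" and kappa C :: real
  assumes beta0_pos: "0 < beta0" and beta1_less_1: "beta1 < 1"
    and kappa_pos: "0 < kappa" and C_nonneg: "0 \<le> C"
    and f_mono: "\<And>k. f k \<le> f (Suc k)" and f_bdd: "bdd_above (range f)"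
    and progress: "\<And>k. beta0 \<le> rt k \<Longrightarrow> f k + beta0 * (min 1 (kappa * delta k) * A k / 2) \<le> f (Suc k)"
    and accuracy: "\<And>k. 1 - C * (delta k)^2 / (min 1 (kappa * delta k) * A k / 2) \<le> rt k"
begin

lemma very_successful_if_radius_small:
  assumes \<epsilon>: "0 < \<epsilon>"
  shows "\<exists>ds>0. \<forall>k. \<epsilon> \<le> A k \<longrightarrow> delta k \<le> ds \<longrightarrow> beta1 \<le> rt k"
proof -
  define ds where "ds = min (1 / kappa) ((1 - beta1) * kappa * \<epsilon> / (2 * C + 1))"
  have "beta1 \<le> rt k" if A: "\<epsilon> \<le> A k" and small: "delta k \<le> ds" for k
  proof -
    define d where "d = delta k"
    have d_pos: "0 < d" by (simp add: d_def delta_pos)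
    have "kappa * d \<le> 1"
      using small kappa_pos by (simp add: d_def ds_def le_divide_eq mult.commute)
    hence "kappa * d * \<epsilon> / 2 \<le> min 1 (kappa * delta k) * A k / 2"
      using A d_pos kappa_pos by (simp add: d_def min_absorb2)
    moreover have "0 < kappa * d * \<epsilon> / 2" using d_pos kappa_pos \<epsilon> by simp
    ultimately have "C * d^2 / (min 1 (kappa * delta k) * A k / 2) \<le> C * d^2 / (kappa * d * \<epsilon> / 2)"
      using C_nonneg by (intro divide_left_mono) auto
    also have "\<dots> = 2 * C * d / (kappa * \<epsilon>)"
      using d_pos kappa_pos \<epsilon> by (simp add: power2_eq_square)
    also have "\<dots> \<le> 1 - beta1"
    proof -
      have "d * (2 * C + 1) \<le> (1 - beta1) * kappa * \<epsilon>"
        using small C_nonneg by (simp add: d_def ds_def le_divide_eq)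
      moreover have "d * (2 * C + 1) = 2 * C * d + d" by (simp add: algebra_simps)
      ultimately have "2 * C * d \<le> (1 - beta1) * (kappa * \<epsilon>)"
        using d_pos by (simp add: mult.assoc)
      thus ?thesis using kappa_pos \<epsilon> by (simp add: pos_divide_le_eq)
    qed
    finally show ?thesis using accuracy[of k] by (simp add: d_def)
  qed
  moreover have "0 < ds" using kappa_pos beta1_less_1 \<epsilon> C_nonneg by (simp add: ds_def)
  ultimately show ?thesis by blast
qed

lemma frequently_A_less:
  assumes \<epsilon>: "0 < \<epsilon>"
  shows "\<exists>k\<ge>K. A k < \<epsilon>"
proof (rule ccontr)
  assume "\<not> ?thesis"
  hence A_ge: "\<And>k. K \<le> k \<Longrightarrow> \<epsilon> \<le> A k" by (simp add: not_less)
  obtain ds where "0 < ds" "\<And>k. \<epsilon> \<le> A k \<Longrightarrow> delta k \<le> ds \<Longrightarrow> beta1 \<le> rt k"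
    using very_successful_if_radius_small[OF \<epsilon>] by blast
  then obtain m where m: "0 < m" "\<And>k. K \<le> k \<Longrightarrow> m \<le> delta k"
    using radius_bounded_below[of ds K] A_ge by blast
  define c where "c = beta0 * (min 1 (kappa * m) * \<epsilon> / 2)"
  have "\<exists>j\<ge>k. f j + c \<le> f (Suc j)" for k
  proof -
    obtain j where j: "max k K \<le> j" "beta0 \<le> rt j"
      using frequently_accepted[OF m max.cobounded2] by auto
    have "min 1 (kappa * m) \<le> min 1 (kappa * delta j)"
      using m(2)[of j] j(1) kappa_pos by (intro min.mono) simp_all
    hence "min 1 (kappa * m) * \<epsilon> \<le> min 1 (kappa * delta j) * A j"
      using A_ge[of j] j(1) delta_pos[of j] kappa_pos \<epsilon> by (intro mult_mono) simp_all
    hence "c \<le> beta0 * (min 1 (kappa * delta j) * A j / 2)"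
      using beta0_pos by (simp add: c_def)
    thus ?thesis using progress[OF j(2)] j(1) by (intro exI[of _ j]) simp
  qed
  moreover have "0 < c" using beta0_pos kappa_pos m(1) \<epsilon> by (simp add: c_def)
  moreover have "incseq f" using f_mono by (rule incseq_SucI)
  ultimately show False
    using unbounded_if_frequent_increase f_bdd by blast
qed

end

section \<open>The trust-region method for policy optimisation\<close>

locale trust_region_mdp = mdp P r rho0 gam
  for P :: "'s::finite \<Rightarrow> 'a::finite \<Rightarrow> 's \<Rightarrow> real" and r rho0 gam +
  fixes beta0 beta1 g1 g2 g3 :: real and pol pt :: "nat \<Rightarrow> 's \<Rightarrow> 'a \<Rightarrow> real"
    and delta :: "nat \<Rightarrow> real"
  assumes betas: "0 < beta0" "beta0 < beta1" "beta1 < 1"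
    and gs: "0 < g3" "g3 < g2" "g2 \<le> 1" "1 < g1"
    and pol0: "is_policy (pol 0)"
    and delta0: "delta 0 > 0"
    and subprob: "\<And>k. tr_optimal P r gam rho0 (pol k) (delta k) (pt (Suc k))"
    and accept: "\<And>k. pol (Suc k) =
        (if tr_ratio P r gam rho0 (pol k) (pt (Suc k)) \<ge> beta0 then pt (Suc k) else pol k)"
    and radius: "\<And>k. delta (Suc k) =
        (if tr_ratio P r gam rho0 (pol k) (pt (Suc k)) \<ge> beta1 then g1 * delta k
         else if tr_ratio P r gam rho0 (pol k) (pt (Suc k)) \<ge> beta0 then g2 * delta k
         else g3 * delta k)"
    and Astar_pos: "\<And>k. Astar P r gam rho0 (pol k) > 0"
begin

sublocale trust_region_radius beta0 beta1 g1 g2 g3 "\<lambda>k. tr_ratio P r gam rho0 (pol k) (pt (Suc k))" delta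
  using betas gs delta0 radius by unfold_locales auto

abbreviation ratio :: "nat \<Rightarrow> real" where
  "ratio k \<equiv> tr_ratio P r gam rho0 (pol k) (pt (Suc k))"

definition gain :: "nat \<Rightarrow> real" where
  "gain k = surrogate P r gam rho0 (pol k) (pt (Suc k)) - surrogate P r gam rho0 (pol k) (pol k)"

definition C_err :: real where
  "C_err = 4 * gam * Amax / ((1 - gam) * rho_min)"

lemma is_policy_pt: "is_policy (pt (Suc k))"
  using subprob[of k] by (simp add: tr_optimal_def tr_feasible_def)

lemma is_policy_pol: "is_policy (pol k)"
  by (induction k) (simp_all add: pol0 accept is_policy_pt)

lemma gain_ge: "min 1 ((1 - gam) * delta k) * Astar P r gam rho0 (pol k) / 2 \<le> gain k"
  unfolding gain_def by (rule surrogate_improvement_ge[OF is_policy_pol delta_pos subprob Astar_pos])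

lemma model_decrease_pos: "0 < min 1 ((1 - gam) * delta k) * Astar P r gam rho0 (pol k) / 2"
  using delta_pos[of k] gam_less_1 Astar_pos[of k] by simp

lemma gain_pos: "0 < gain k"
  using gain_ge[of k] model_decrease_pos[of k] by linarith

lemma eta_pt_sub_eta_pol: "eta P r gam rho0 (pt (Suc k)) - eta P r gam rho0 (pol k) = ratio k * gain k"
  using gain_pos[of k] by (simp add: tr_ratio_def gain_def)

lemma eta_pol_progress:
  assumes "beta0 \<le> ratio k"
  shows "eta P r gam rho0 (pol k) + beta0 * gain k \<le> eta P r gam rho0 (pol (Suc k))"
proof -
  have "pol (Suc k) = pt (Suc k)" using assms by (simp add: accept)
  thus ?thesis
    using eta_pt_sub_eta_pol[of k] mult_right_mono[OF assms less_imp_le[OF gain_pos[of k]]] by simp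
qed

lemma eta_pol_mono: "eta P r gam rho0 (pol k) \<le> eta P r gam rho0 (pol (Suc k))"
proof (cases "beta0 \<le> ratio k")
  case True
  have "0 \<le> beta0 * gain k" using betas gain_pos[of k] by simp
  thus ?thesis using eta_pol_progress[OF True] by linarith
qed (simp add: accept)

lemma ratio_ge: "1 - C_err * (delta k)^2 / gain k \<le> ratio k"
proof -
  define D where "D = (\<Sum>s\<in>UNIV. visit P gam rho0 (pol k) s * dtv (pol k s) (pt (Suc k) s))"
  have D: "0 \<le> D" "D \<le> delta k"
    using subprob[of k] is_policy_pol[of k] unfolding D_def tr_optimal_def tr_feasible_def
    by (auto intro!: sum_nonneg mult_nonneg_nonneg visit_nonneg dtv_nonneg)
  have "C_err * D^2 \<le> C_err * (delta k)^2"
    using D gam_pos gam_less_1 Amax_nonneg rho_min_pos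
    by (intro mult_left_mono power_mono) (auto simp: C_err_def)
  hence "gain k - C_err * (delta k)^2 \<le> eta P r gam rho0 (pt (Suc k)) - eta P r gam rho0 (pol k)"
    using abs_eta_sub_surrogate_le[OF is_policy_pol is_policy_pt, of k k]
    unfolding gain_def C_err_def D_def
    by (simp add: surrogate_eq_eta_plus_pol_adv pol_adv_self[OF is_policy_pol] abs_le_iff)
  thus ?thesis
    using gain_pos[of k] eta_pt_sub_eta_pol[of k] by (simp add: field_simps)
qed

sublocale trust_region_iteration beta0 beta1 g1 g2 g3 ratio delta
  "\<lambda>k. eta P r gam rho0 (pol k)" "\<lambda>k. Astar P r gam rho0 (pol k)" "1 - gam" C_err
proof unfold_locales
  show "0 \<le> C_err"
    using gam_pos gam_less_1 Amax_nonneg rho_min_pos by (simp add: C_err_def)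
  show "bdd_above (range (\<lambda>k. eta P r gam rho0 (pol k)))"
    using abs_value_from_le[OF is_policy_pol init]
    by (intro bdd_aboveI[of _ "Rmax / (1 - gam)"]) (auto simp: eta_def abs_le_iff)
  fix k
  show "beta0 \<le> ratio k \<Longrightarrow> eta P r gam rho0 (pol k)
      + beta0 * (min 1 ((1 - gam) * delta k) * Astar P r gam rho0 (pol k) / 2)
      \<le> eta P r gam rho0 (pol (Suc k))"
    using eta_pol_progress[of k] mult_left_mono[OF gain_ge[of k], of beta0] betas by linarith
  have "C_err * (delta k)^2 / gain k
      \<le> C_err * (delta k)^2 / (min 1 ((1 - gam) * delta k) * Astar P r gam rho0 (pol k) / 2)"
    using \<open>0 \<le> C_err\<close> gain_ge[of k] gain_pos[of k] model_decrease_pos[of k]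
    by (intro divide_left_mono mult_pos_pos) auto
  thus "1 - C_err * (delta k)^2 / (min 1 ((1 - gam) * delta k) * Astar P r gam rho0 (pol k) / 2)
      \<le> ratio k"
    using ratio_ge[of k] by linarith
qed (use betas gam_less_1 eta_pol_mono in auto)

lemma liminf_Astar_eq_0: "liminf (\<lambda>k. ereal (Astar P r gam rho0 (pol k))) = 0"
  using Astar_pos frequently_A_less by (intro liminf_eq_0_if_frequently_small) (auto intro: less_imp_le)

lemma eta_pol_tendsto_optimum:
  assumes opt: "\<And>p. is_policy p \<Longrightarrow> eta P r gam rho0 p \<le> eta P r gam rho0 pistar"
    and pistar: "is_policy pistar"
  shows "(\<lambda>k. eta P r gam rho0 (pol k)) \<longlonglongrightarrow> eta P r gam rho0 pistar"
proof (rule incseq_tendsto_if_approaches)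
  show "incseq (\<lambda>k. eta P r gam rho0 (pol k))" by (rule incseq_SucI) (rule eta_pol_mono)
  show "eta P r gam rho0 (pol k) \<le> eta P r gam rho0 pistar" for k by (rule opt[OF is_policy_pol])
  fix \<epsilon> :: real assume "0 < \<epsilon>"
  hence "0 < \<epsilon> * ((1 - gam) * rho_min)" using gam_less_1 rho_min_pos by simp
  then obtain k where "Astar P r gam rho0 (pol k) < \<epsilon> * ((1 - gam) * rho_min)"
    using frequently_A_less by blast
  hence "Astar P r gam rho0 (pol k) / ((1 - gam) * rho_min) < \<epsilon>"
    using gam_less_1 rho_min_pos by (simp add: divide_less_eq)
  hence "eta P r gam rho0 pistar - \<epsilon> < eta P r gam rho0 (pol k)"
    using eta_suboptimality_le[OF is_policy_pol pistar, of k] by linarith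
  thus "\<exists>k. eta P r gam rho0 pistar - \<epsilon> < eta P r gam rho0 (pol k)" ..
qed

end

theorem mainTheorem4:
  fixes P :: "'s::finite \<Rightarrow> 'a::finite \<Rightarrow> 's \<Rightarrow> real"
    and r :: "'s \<Rightarrow> 'a \<Rightarrow> real"
    and rho0 :: "'s \<Rightarrow> real"
    and gam :: real
    and beta0 beta1 g1 g2 g3 :: real
    and pol pt :: "nat \<Rightarrow> 's \<Rightarrow> 'a \<Rightarrow> real"
    and delta :: "nat \<Rightarrow> real"
  assumes trans: "\<And>s a. is_stoch (P s a)"
    and init: "is_stoch rho0" and init_pos: "\<And>s. rho0 s > 0"
    and disc: "0 < gam" "gam < 1"
    and betas: "0 < beta0" "beta0 < beta1" "beta1 < 1"
    and gs: "0 < g3" "g3 < g2" "g2 \<le> 1" "1 < g1"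
    and pol0: "is_policy (pol 0)"
    and delta0: "delta 0 > 0"
    and subprob: "\<And>k. tr_optimal P r gam rho0 (pol k) (delta k) (pt (Suc k))"
    and accept: "\<And>k. pol (Suc k) =
        (if tr_ratio P r gam rho0 (pol k) (pt (Suc k)) \<ge> beta0 then pt (Suc k) else pol k)"
    and radius: "\<And>k. delta (Suc k) =
        (if tr_ratio P r gam rho0 (pol k) (pt (Suc k)) \<ge> beta1 then g1 * delta k
         else if tr_ratio P r gam rho0 (pol k) (pt (Suc k)) \<ge> beta0 then g2 * delta k
         else g3 * delta k)"
    and Apos: "\<And>k. Astar P r gam rho0 (pol k) > 0"
  shows "liminf (\<lambda>k. ereal (Astar P r gam rho0 (pol k))) = 0 \<and>
         (\<forall>pistar. is_policy pistar \<and>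
            (\<forall>p. is_policy p \<longrightarrow> eta P r gam rho0 p \<le> eta P r gam rho0 pistar) \<longrightarrow>
            (\<lambda>k. eta P r gam rho0 (pol k)) \<longlonglongrightarrow> eta P r gam rho0 pistar)"
proof -
  interpret trust_region_mdp P r rho0 gam beta0 beta1 g1 g2 g3 pol pt delta
    by unfold_locales (fact assms)+
  show ?thesis using liminf_Astar_eq_0 eta_pol_tendsto_optimum by blast
qed

end
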